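(* Let $\mathcal G=(N,T,I,P,S)$ be an indexed grammar with $S\in\mathrm{Useful}$, and let $\overline{\mathcal G}$ be its annotated version. Then $L(\overline{\mathcal G})=L(\mathcal G)$, and $\overline{\mathcal G}$ is productive: for every sentential form $u$ of $\overline{\mathcal G}$ with $(S,\mathrm{Useful})\Rightarrow^*_{\overline{\mathcal G}}u$ there exists $w\in T^*$ with $u\Rightarrow^*_{\overline{\mathcal G}}w$.
   Context: An indexed grammar is a tuple $\mathcal{G}=(N,T,I,P,S)$ where $N$ (non-terminals), $T$ (terminals) and $I$ (index or stack symbols) are finite pairwise disjoint alphabets, $S\in N$, and $P$ is a finite set of productions, each of one of the forms $A\to w$ ($A\in N$, $w\in T^*$), $A\to BC$ ($A,B,C\in N$), $A\to Bf$ ($A,B\in N$, $f\in I$), $Af\to B$ ($A,B\in N$, $f\in I$). A term is written $A[z]$ with $A\in N$ and $z\in I^*$ (the stack, leftmost symbol on top; $A$ alone means $A[\varepsilon]$); a sentential form is a finite word whose letters are terms or terminals. The one-step derivation relation $\Rightarrow_{\mathcal G}$ is: for sentential forms $u,v$, $uA[z]v\Rightarrow uB[z]C[z]v$ if $A\to BC\in P$; $uA[z]v\Rightarrow uB[fz]v$ if $A\to Bf\in P$; $uA[fz]v\Rightarrow uB[z]v$ if $Af\to B\in P$; $uA[z]v\Rightarrow uwv$ if $A\to w\in P$ with $w\in T^*$. $\Rightarrow^*_{\mathcal G}$ is its reflexive transitive closure and $L(\mathcal G)=\{w\in T^*: S\Rightarrow^*_{\mathcal G} w\}$. For $X\subseteq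 N$ and $z\in I^*$, $z\cdot X=\{A\in N:\exists u\in(X\cup T)^*,\ A[z]\Rightarrow^*_{\mathcal G}u\}$, where a word of $(X\cup T)^*$ is regarded as a sentential form in which every non-terminal has empty stack. $\mathrm{Useful}=\{A\in N:\exists w\in T^*,\ A\Rightarrow^*_{\mathcal G}w\}$. Assuming $S\in\mathrm{Useful}$, the annotated version of $\mathcal G$ is the indexed grammar $\overline{\mathcal G}=(\overline N,T,\overline I,\overline P,\overline S)$ with $\overline N=\{(A,X)\in N\times 2^N: A\in X\}$, $\overline I=I\times 2^N$, $\overline S=(S,\mathrm{Useful})$, and $\overline P$ consisting exactly of: $(A,X)\to w$ for every $A\to w\in P$ ($w\in T^*$) and every $X$ with $A\in X$; $(A,X)\to(B,X)(C,X)$ for every $A\to BC\in P$ and every $X$ with $A,B,C\in X$; $(A,X)\to(B,Y)(f,X)$ for every $A\to Bf\in P$ and every $X$, where $Y=f\cdot X$, $A\in X$ and $B\in Y$; $(A,Y)(f,X)\to(B,X)$ for every $Af\to B\in P$ and every $X$, where $Y=f\cdot X$, $A\in Y$ and $B\in X$. *)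

theory Defs
  imports Main
begin

datatype ('n, 't, 'i) iprod =
    TermProd 'n "'t list"
  | BinProd 'n 'n 'n
  | PushProd 'n 'n 'i         (* A \<rightarrow> B f *)
  | PopProd 'n 'i 'n          (* A f \<rightarrow> B *)

record ('n, 't, 'i) igrammar =
  nts :: "'n set"
  tms :: "'t set"
  idx :: "'i set"
  prods :: "('n, 't, 'i) iprod set"
  start :: 'n

text \<open>Letters of sentential forms: terms A[z] (stack z, leftmost on top) or terminals.\<close>
datatype ('n, 't, 'i) sym = NT 'n "'i list" | Tm 't

definition wf_igrammar :: "('n, 't, 'i) igrammar \<Rightarrow> bool" where
  "wf_igrammar G \<longleftrightarrow> finite (nts G) \<and> finite (tms G) \<and> finite (idx G) \<and>
     finite (prods G) \<and> start G \<in> nts G \<and>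
     (\<forall>p \<in> prods G. case p of
        TermProd A w \<Rightarrow> A \<in> nts G \<and> set w \<subseteq> tms G
      | BinProd A B C \<Rightarrow> A \<in> nts G \<and> B \<in> nts G \<and> C \<in> nts G
      | PushProd A B f \<Rightarrow> A \<in> nts G \<and> B \<in> nts G \<and> f \<in> idx G
      | PopProd A f B \<Rightarrow> A \<in> nts G \<and> f \<in> idx G \<and> B \<in> nts G)"

definition step :: "('n, 't, 'i) igrammar \<Rightarrow> ('n, 't, 'i) sym list \<Rightarrow> ('n, 't, 'i) sym list \<Rightarrow> bool" where
  "step G u v \<longleftrightarrow> (\<exists>u1 u2 A z. u = u1 @ [NT A z] @ u2 \<and>
     ((\<exists>B C. BinProd A B C \<in> prods G \<and> v = u1 @ [NT B z, NT C z] @ u2) \<or>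
      (\<exists>B f. PushProd A B f \<in> prods G \<and> v = u1 @ [NT B (f # z)] @ u2) \<or>
      (\<exists>B f z'. z = f # z' \<and> PopProd A f B \<in> prods G \<and> v = u1 @ [NT B z'] @ u2) \<or>
      (\<exists>w. TermProd A w \<in> prods G \<and> v = u1 @ map Tm w @ u2)))"

definition derives :: "('n, 't, 'i) igrammar \<Rightarrow> ('n, 't, 'i) sym list \<Rightarrow> ('n, 't, 'i) sym list \<Rightarrow> bool" where
  "derives G = (step G)\<^sup>*\<^sup>*"

definition lang :: "('n, 't, 'i) igrammar \<Rightarrow> 't list set" where
  "lang G = {w. set w \<subseteq> tms G \<and> derives G [NT (start G) []] (map Tm w)}"

definition dot :: "('n, 't, 'i) igrammar \<Rightarrow> 'i list \<Rightarrow> 'n set \<Rightarrow> 'n set" where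
  "dot G z X = {A \<in> nts G. \<exists>u. set u \<subseteq> {NT B [] | B. B \<in> X} \<union> {Tm t | t. t \<in> tms G} \<and>
                                derives G [NT A z] u}"

definition Useful :: "('n, 't, 'i) igrammar \<Rightarrow> 'n set" where
  "Useful G = {A \<in> nts G. \<exists>w. set w \<subseteq> tms G \<and> derives G [NT A []] (map Tm w)}"

definition annotate :: "('n, 't, 'i) igrammar \<Rightarrow> ('n \<times> 'n set, 't, 'i \<times> 'n set) igrammar" where
  "annotate G = \<lparr> nts = {(A, X). X \<subseteq> nts G \<and> A \<in> X},
     tms = tms G,
     idx = idx G \<times> Pow (nts G),
     prods =
       {TermProd (A, X) w | A w X. TermProd A w \<in> prods G \<and> X \<subseteq> nts G \<and> A \<in> X}
     \<union> {BinProd (A, X) (B, X) (C, X) | A B C X. BinProd A B C \<in> prods G \<and> X \<subseteq> nts G \<and>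
           A \<in> X \<and> B \<in> X \<and> C \<in> X}
     \<union> {PushProd (A, X) (B, dot G [f] X) (f, X) | A B f X. PushProd A B f \<in> prods G \<and>
           X \<subseteq> nts G \<and> A \<in> X \<and> B \<in> dot G [f] X}
     \<union> {PopProd (A, dot G [f] X) (f, X) (B, X) | A f B X. PopProd A f B \<in> prods G \<and>
           X \<subseteq> nts G \<and> A \<in> dot G [f] X \<and> B \<in> X},
     start = (start G, Useful G) \<rparr>"

end

theory Submission
  imports Defs
begin

(*
  Every production rewrites a single term, so a sentential form derives a form over
  X \<union> T with empty stacks iff each of its symbols does. This makes A \<in> z \<cdot> X an
  inductive property of the pair (A, z), with one rule per kind of production, and from
  that description (x @ y) \<cdot> X = x \<cdot> (y \<cdot> X). Hence the set z \<cdot> {} of non-terminals that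
  are productive on the stack z is determined by the top of z and the productive set of
  the stack below it, which is exactly the annotation the annotated grammar carries.
  Annotating every term A[z] in this way, the steps of G that lead to productive forms
  correspond to the steps of the annotated grammar between annotated forms, and every
  form reachable in the annotated grammar is the annotation of a productive form of G.
*)

inductive produces :: "('n, 't, 'i) igrammar \<Rightarrow> ('n, 't, 'i) sym \<Rightarrow> ('n, 't, 'i) sym list \<Rightarrow> bool"
  for G :: "('n, 't, 'i) igrammar" where
  TermProd: "TermProd A w \<in> prods G \<Longrightarrow> produces G (NT A z) (map Tm w)"
| BinProd: "BinProd A B C \<in> prods G \<Longrightarrow> produces G (NT A z) [NT B z, NT C z]"
| PushProd: "PushProd A B f \<in> prods G \<Longrightarrow> produces G (NT A z) [NT B (f # z)]"
| PopProd: "PopProd A f B \<in> prods G \<Longrightarrow> produces G (NT A (f # z)) [NT B z]"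

lemma step_iff_produces:
  "step G u v \<longleftrightarrow> (\<exists>u1 a u2 r. u = u1 @ [a] @ u2 \<and> v = u1 @ r @ u2 \<and> produces G a r)"
proof
  assume "step G u v"
  then show "\<exists>u1 a u2 r. u = u1 @ [a] @ u2 \<and> v = u1 @ r @ u2 \<and> produces G a r"
    unfolding step_def by (elim exE conjE disjE) (blast intro: produces.intros)+
next
  assume "\<exists>u1 a u2 r. u = u1 @ [a] @ u2 \<and> v = u1 @ r @ u2 \<and> produces G a r"
  then obtain u1 a u2 r where u: "u = u1 @ [a] @ u2" and v: "v = u1 @ r @ u2"
    and "produces G a r"
    by blast
  from this(3) show "step G u v"
    unfolding u v step_def by cases blast+
qed

lemma derives_if_produces:
  assumes "produces G a r"
  shows "derives G [a] r"
proof -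
  have "step G ([] @ [a] @ []) ([] @ r @ [])"
    using assms unfolding step_iff_produces by blast
  then show ?thesis
    unfolding derives_def by simp
qed

lemma step_in_context:
  assumes "step G u v"
  shows "step G (l @ u @ l') (l @ v @ l')"
proof -
  obtain u1 a u2 r where "u = u1 @ [a] @ u2" "v = u1 @ r @ u2" "produces G a r"
    using assms unfolding step_iff_produces by blast
  then have "l @ u @ l' = (l @ u1) @ [a] @ (u2 @ l')" "l @ v @ l' = (l @ u1) @ r @ (u2 @ l')"
    "produces G a r"
    by simp_all
  then show ?thesis
    unfolding step_iff_produces by blast
qed

lemma derives_in_context: "derives G u v \<Longrightarrow> derives G (l @ u @ l') (l @ v @ l')"
  unfolding derives_def
  by (induction rule: rtranclp_induct) (auto intro: rtranclp.rtrancl_into_rtrancl step_in_context)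

lemma derives_append:
  assumes "derives G u u'" and "derives G v v'"
  shows "derives G (u @ v) (u' @ v')"
proof -
  have "derives G (u @ v) (u' @ v)"
    using derives_in_context[OF assms(1), of "[]" v] by simp
  moreover have "derives G (u' @ v) (u' @ v')"
    using derives_in_context[OF assms(2), of u' "[]"] by simp
  ultimately show ?thesis
    unfolding derives_def by (rule rtranclp_trans)
qed

lemma derives_concat:
  assumes "\<forall>a\<in>set v. \<exists>u. derives G [a] u \<and> set u \<subseteq> L"
  shows "\<exists>u. derives G v u \<and> set u \<subseteq> L"
  using assms
proof (induction v)
  case Nil
  show ?case
    unfolding derives_def by auto
next
  case (Cons a v)
  then obtain ua uv where "derives G [a] ua" "derives G v uv" "set ua \<subseteq> L" "set uv \<subseteq> L"
    by auto
  then show ?case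
    using derives_append[of G "[a]" ua v uv] by (intro exI[of _ "ua @ uv"]) auto
qed

lemma derives_into_if_produces:
  assumes "produces G a r" and "\<forall>b\<in>set r. \<exists>u. derives G [b] u \<and> set u \<subseteq> L"
  shows "\<exists>u. derives G [a] u \<and> set u \<subseteq> L"
proof -
  obtain u where "derives G r u" "set u \<subseteq> L"
    using derives_concat[OF assms(2)] by blast
  moreover have "derives G [a] r"
    using assms(1) by (rule derives_if_produces)
  ultimately show ?thesis
    unfolding derives_def by (meson rtranclp_trans)
qed

abbreviation leaf_syms :: "('n, 't, 'i) igrammar \<Rightarrow> 'n set \<Rightarrow> ('n, 't, 'i) sym set" where
  "leaf_syms G X \<equiv> {NT B [] | B. B \<in> X} \<union> {Tm t | t. t \<in> tms G}"

inductive reaches :: "('n, 't, 'i) igrammar \<Rightarrow> 'n set \<Rightarrow> 'n \<Rightarrow> 'i list \<Rightarrow> bool"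
  for G :: "('n, 't, 'i) igrammar" and X :: "'n set" where
  leaf: "A \<in> X \<Longrightarrow> reaches G X A []"
| TermProd: "TermProd A w \<in> prods G \<Longrightarrow> set w \<subseteq> tms G \<Longrightarrow> reaches G X A z"
| BinProd: "BinProd A B C \<in> prods G \<Longrightarrow> reaches G X B z \<Longrightarrow> reaches G X C z \<Longrightarrow> reaches G X A z"
| PushProd: "PushProd A B f \<in> prods G \<Longrightarrow> reaches G X B (f # z) \<Longrightarrow> reaches G X A z"
| PopProd: "PopProd A f B \<in> prods G \<Longrightarrow> reaches G X B z \<Longrightarrow> reaches G X A (f # z)"

fun reaches_sym :: "('n, 't, 'i) igrammar \<Rightarrow> 'n set \<Rightarrow> ('n, 't, 'i) sym \<Rightarrow> bool" where
  "reaches_sym G X (NT A z) \<longleftrightarrow> reaches G X A z"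
| "reaches_sym G X (Tm t) \<longleftrightarrow> t \<in> tms G"

lemma reaches_sym_if_produces:
  "produces G a r \<Longrightarrow> \<forall>b\<in>set r. reaches_sym G X b \<Longrightarrow> reaches_sym G X a"
  by (induction rule: produces.induct) (auto intro: reaches.intros)

lemma reaches_sym_if_derives:
  assumes "derives G v u" and "set u \<subseteq> leaf_syms G X"
  shows "\<forall>a\<in>set v. reaches_sym G X a"
  using assms(1) unfolding derives_def
proof (induction rule: converse_rtranclp_induct)
  case base
  then show ?case
    using assms(2) by (auto intro: reaches.leaf dest!: subsetD)
next
  case (step v v')
  then obtain v1 a v2 r where "v = v1 @ [a] @ v2" "v' = v1 @ r @ v2" "produces G a r"
    unfolding step_iff_produces by blast
  with step.IH show ?case
    using reaches_sym_if_produces by fastforce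
qed

lemma derives_if_reaches:
  "reaches G X A z \<Longrightarrow> \<exists>u. derives G [NT A z] u \<and> set u \<subseteq> leaf_syms G X"
proof (induction rule: reaches.induct)
  case (leaf A)
  then show ?case
    unfolding derives_def by (intro exI[of _ "[NT A []]"]) auto
next
  case (TermProd A w z)
  then show ?case
    using derives_if_produces[OF produces.TermProd] by (intro exI[of _ "map Tm w"]) auto
next
  case (BinProd A B C z)
  then show ?case
    by (intro derives_into_if_produces[OF produces.BinProd[OF BinProd.hyps(1)]]) auto
next
  case (PushProd A B f z)
  then show ?case
    by (intro derives_into_if_produces[OF produces.PushProd[OF PushProd.hyps(1)]]) auto
next
  case (PopProd A f B z)
  then show ?case
    by (intro derives_into_if_produces[OF produces.PopProd[OF PopProd.hyps(1)]]) auto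
qed

lemma reaches_sym_iff_derives:
  "(\<forall>a\<in>set v. reaches_sym G X a) \<longleftrightarrow> (\<exists>u. derives G v u \<and> set u \<subseteq> leaf_syms G X)"
proof
  assume reach: "\<forall>a\<in>set v. reaches_sym G X a"
  have "\<exists>u. derives G [a] u \<and> set u \<subseteq> leaf_syms G X" if "a \<in> set v" for a
  proof (cases a)
    case (NT A z)
    then have "reaches G X A z"
      using reach that by auto
    then show ?thesis
      unfolding NT by (rule derives_if_reaches)
  next
    case (Tm t)
    then show ?thesis
      using reach that unfolding derives_def by (intro exI[of _ "[a]"]) auto
  qed
  then show "\<exists>u. derives G v u \<and> set u \<subseteq> leaf_syms G X"
    by (intro derives_concat) blast
next
  assume "\<exists>u. derives G v u \<and> set u \<subseteq> leaf_syms G X"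
  then show "\<forall>a\<in>set v. reaches_sym G X a"
    using reaches_sym_if_derives by blast
qed

lemma mem_dot_iff: "A \<in> dot G z X \<longleftrightarrow> A \<in> nts G \<and> reaches G X A z"
  using reaches_sym_iff_derives[of "[NT A z]" G X] unfolding dot_def by auto

lemma set_subset_Tm_iff: "set u \<subseteq> {Tm t | t. t \<in> T} \<longleftrightarrow> (\<exists>w. u = map Tm w \<and> set w \<subseteq> T)"
proof
  assume terminals: "set u \<subseteq> {Tm t | t. t \<in> T}"
  then obtain w where "u = map Tm w"
    using ex_map_conv[of u Tm] by auto
  with terminals show "\<exists>w. u = map Tm w \<and> set w \<subseteq> T"
    by auto
qed fastforce

lemma derives_terminal_iff:
  "(\<exists>w. set w \<subseteq> tms G \<and> derives G v (map Tm w)) \<longleftrightarrow> (\<forall>a\<in>set v. reaches_sym G {} a)"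
proof -
  have terminals: "leaf_syms G {} = {Tm t | t. t \<in> tms G}"
    by blast
  show ?thesis
    unfolding reaches_sym_iff_derives terminals set_subset_Tm_iff by auto
qed

lemma Useful_eq_dot: "Useful G = dot G [] {}"
proof -
  have "reaches G {} A [] \<longleftrightarrow> (\<exists>w. set w \<subseteq> tms G \<and> derives G [NT A []] (map Tm w))" for A
    using derives_terminal_iff[of G "[NT A []]"] by simp
  then show ?thesis
    unfolding Useful_def set_eq_iff mem_dot_iff by blast
qed

lemma wf_igrammar_prodsD:
  assumes "wf_igrammar G"
  shows "TermProd A w \<in> prods G \<Longrightarrow> A \<in> nts G \<and> set w \<subseteq> tms G"
    and "BinProd A B C \<in> prods G \<Longrightarrow> A \<in> nts G \<and> B \<in> nts G \<and> C \<in> nts G"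
    and "PushProd A B f \<in> prods G \<Longrightarrow> A \<in> nts G \<and> B \<in> nts G"
    and "PopProd A f B \<in> prods G \<Longrightarrow> A \<in> nts G \<and> B \<in> nts G"
  using assms unfolding wf_igrammar_def by fastforce+

lemma reaches_append_stack: "reaches G (dot G y X) A x \<Longrightarrow> reaches G X A (x @ y)"
proof (induction rule: reaches.induct)
  case (leaf A)
  then show ?case
    by (simp add: mem_dot_iff)
qed (auto intro: reaches.TermProd reaches.BinProd reaches.PushProd reaches.PopProd)

lemma reaches_split_stack:
  assumes wf: "wf_igrammar G"
  shows "reaches G X A z \<Longrightarrow> A \<in> nts G \<Longrightarrow> z = x @ y \<Longrightarrow> reaches G (dot G y X) A x"
proof (induction arbitrary: x rule: reaches.induct)
  case (leaf A)
  then show ?case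
    by (simp add: mem_dot_iff reaches.leaf)
next
  case (TermProd A w z)
  then show ?case
    by (simp add: reaches.TermProd)
next
  case (BinProd A B C z)
  then show ?case
    using wf_igrammar_prodsD(2)[OF wf] by (simp add: reaches.BinProd)
next
  case (PushProd A B f z)
  then show ?case
    using wf_igrammar_prodsD(3)[OF wf] by (simp add: reaches.PushProd)
next
  case (PopProd A f B z)
  show ?case
  proof (cases x)
    case Nil
    then have "y = f # z"
      using PopProd.prems(2) by simp
    then have "reaches G X A y"
      using reaches.PopProd[OF PopProd.hyps(1,2)] by simp
    then show ?thesis
      using Nil PopProd.prems(1) by (simp add: mem_dot_iff reaches.leaf)
  next
    case (Cons g x')
    then show ?thesis
      using PopProd wf_igrammar_prodsD(4)[OF wf] by (simp add: reaches.PopProd)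
  qed
qed

lemma dot_append:
  assumes "wf_igrammar G"
  shows "dot G (x @ y) X = dot G x (dot G y X)"
  using reaches_append_stack reaches_split_stack[OF assms] by (auto simp: mem_dot_iff)

lemma dot_Cons:
  assumes "wf_igrammar G"
  shows "dot G (f # z) X = dot G [f] (dot G z X)"
  using dot_append[OF assms, of "[f]"] by simp

lemma dot_subset_nts: "dot G z X \<subseteq> nts G"
  unfolding dot_def by blast

primrec annotate_stack :: "('n, 't, 'i) igrammar \<Rightarrow> 'i list \<Rightarrow> ('i \<times> 'n set) list" where
  "annotate_stack G [] = []"
| "annotate_stack G (f # z) = (f, dot G z {}) # annotate_stack G z"

fun annotate_sym :: "('n, 't, 'i) igrammar \<Rightarrow> ('n, 't, 'i) sym \<Rightarrow> ('n \<times> 'n set, 't, 'i \<times> 'n set) sym" where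
  "annotate_sym G (NT A z) = NT (A, dot G z {}) (annotate_stack G z)"
| "annotate_sym G (Tm t) = Tm t"

lemma map_Tm_eq_map_annotate_sym_iff:
  "map Tm w = map (annotate_sym G) v \<longleftrightarrow> v = map Tm w"
proof -
  have "Tm t = annotate_sym G a \<longleftrightarrow> a = Tm t" for a t
    by (cases a) auto
  then show ?thesis
    by (induction v arbitrary: w) (auto simp: Cons_eq_map_conv)
qed

lemma annotate_simps [simp]:
  "tms (annotate G) = tms G"
  "start (annotate G) = (start G, Useful G)"
  by (simp_all add: annotate_def)

lemma annotate_prodsI:
  "TermProd A w \<in> prods G \<Longrightarrow> X \<subseteq> nts G \<Longrightarrow> A \<in> X \<Longrightarrow>
     TermProd (A, X) w \<in> prods (annotate G)"
  "BinProd A B C \<in> prods G \<Longrightarrow> X \<subseteq> nts G \<Longrightarrow> A \<in> X \<Longrightarrow> B \<in> X \<Longrightarrow> C \<in> X \<Longrightarrow>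
     BinProd (A, X) (B, X) (C, X) \<in> prods (annotate G)"
  "PushProd A B f \<in> prods G \<Longrightarrow> X \<subseteq> nts G \<Longrightarrow> A \<in> X \<Longrightarrow> B \<in> dot G [f] X \<Longrightarrow>
     PushProd (A, X) (B, dot G [f] X) (f, X) \<in> prods (annotate G)"
  "PopProd A f B \<in> prods G \<Longrightarrow> X \<subseteq> nts G \<Longrightarrow> A \<in> dot G [f] X \<Longrightarrow> B \<in> X \<Longrightarrow>
     PopProd (A, dot G [f] X) (f, X) (B, X) \<in> prods (annotate G)"
  unfolding annotate_def by auto

lemma annotate_prodsD:
  "TermProd P w \<in> prods (annotate G) \<Longrightarrow> TermProd (fst P) w \<in> prods G"
  "BinProd P Q R \<in> prods (annotate G) \<Longrightarrow>
     \<exists>A B C X. P = (A, X) \<and> Q = (B, X) \<and> R = (C, X) \<and> BinProd A B C \<in> prods G \<and> B \<in> X \<and> C \<in> X"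
  "PushProd P Q g \<in> prods (annotate G) \<Longrightarrow>
     \<exists>A B f X. P = (A, X) \<and> Q = (B, dot G [f] X) \<and> g = (f, X) \<and> PushProd A B f \<in> prods G \<and>
       B \<in> dot G [f] X"
  "PopProd P g Q \<in> prods (annotate G) \<Longrightarrow>
     \<exists>A f B X. P = (A, dot G [f] X) \<and> g = (f, X) \<and> Q = (B, X) \<and> PopProd A f B \<in> prods G \<and> B \<in> X"
  unfolding annotate_def by auto

lemma produces_annotate:
  assumes wf: "wf_igrammar G"
    and prod: "produces G a r" and reach: "\<forall>b\<in>set r. reaches_sym G {} b"
  shows "produces (annotate G) (annotate_sym G a) (map (annotate_sym G) r)"
proof -
  have "reaches_sym G {} a"
    using reaches_sym_if_produces[OF prod reach] .
  from prod show ?thesis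
  proof cases
    case (TermProd A w z)
    then have "A \<in> dot G z {}"
      using \<open>reaches_sym G {} a\<close> wf_igrammar_prodsD(1)[OF wf] by (simp add: mem_dot_iff)
    then show ?thesis
      using TermProd by (simp add: comp_def produces.TermProd annotate_prodsI(1) dot_subset_nts)
  next
    case (BinProd A B C z)
    then have "A \<in> dot G z {}" "B \<in> dot G z {}" "C \<in> dot G z {}"
      using \<open>reaches_sym G {} a\<close> reach wf_igrammar_prodsD(2)[OF wf] by (simp_all add: mem_dot_iff)
    then show ?thesis
      using BinProd by (simp add: produces.BinProd annotate_prodsI(2) dot_subset_nts)
  next
    case (PushProd A B f z)
    have stack: "dot G (f # z) {} = dot G [f] (dot G z {})"
      by (rule dot_Cons[OF wf])
    from PushProd have "A \<in> dot G z {}" "B \<in> dot G [f] (dot G z {})"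
      using \<open>reaches_sym G {} a\<close> reach wf_igrammar_prodsD(3)[OF wf]
      by (simp_all add: mem_dot_iff flip: stack)
    then show ?thesis
      using PushProd by (simp add: stack produces.PushProd annotate_prodsI(3) dot_subset_nts)
  next
    case (PopProd A f B z)
    have stack: "dot G (f # z) {} = dot G [f] (dot G z {})"
      by (rule dot_Cons[OF wf])
    from PopProd have "A \<in> dot G [f] (dot G z {})" "B \<in> dot G z {}"
      using \<open>reaches_sym G {} a\<close> reach wf_igrammar_prodsD(4)[OF wf]
      by (simp_all add: mem_dot_iff flip: stack)
    then show ?thesis
      using PopProd by (simp add: stack produces.PopProd annotate_prodsI(4) dot_subset_nts)
  qed
qed

lemma produces_annotateD:
  assumes wf: "wf_igrammar G" and prod: "produces (annotate G) (annotate_sym G a) r'"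
  shows "\<exists>r. r' = map (annotate_sym G) r \<and> produces G a r \<and> (\<forall>b\<in>set r. reaches_sym G {} b)"
proof -
  obtain A z where a: "a = NT A z"
    using prod by (cases a) (auto elim: produces.cases)
  from prod have "produces (annotate G) (NT (A, dot G z {}) (annotate_stack G z)) r'"
    unfolding a by simp
  then show ?thesis
  proof cases
    case (TermProd w)
    then have "TermProd A w \<in> prods G"
      using annotate_prodsD(1) by fastforce
    then show ?thesis
      using TermProd wf_igrammar_prodsD(1)[OF wf] unfolding a
      by (intro exI[of _ "map Tm w"]) (auto simp: comp_def intro: produces.TermProd)
  next
    case (BinProd Q R)
    then obtain B C where "Q = (B, dot G z {})" "R = (C, dot G z {})" "BinProd A B C \<in> prods G"
      "B \<in> dot G z {}" "C \<in> dot G z {}"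
      using annotate_prodsD(2) by fastforce
    then show ?thesis
      using BinProd unfolding a
      by (intro exI[of _ "[NT B z, NT C z]"]) (auto simp: mem_dot_iff intro: produces.BinProd)
  next
    case (PushProd Q g)
    then obtain B f where "Q = (B, dot G [f] (dot G z {}))" "g = (f, dot G z {})"
      "PushProd A B f \<in> prods G" "B \<in> dot G [f] (dot G z {})"
      using annotate_prodsD(3) by fastforce
    moreover have "dot G (f # z) {} = dot G [f] (dot G z {})"
      by (rule dot_Cons[OF wf])
    ultimately show ?thesis
      using PushProd unfolding a
      by (intro exI[of _ "[NT B (f # z)]"]) (auto simp: mem_dot_iff intro: produces.PushProd)
  next
    case (PopProd g Q zs)
    then obtain f B X where "g = (f, X)" "Q = (B, X)" "PopProd A f B \<in> prods G" "B \<in> X"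
      using annotate_prodsD(4) by fastforce
    moreover obtain z' where "z = f # z'" "X = dot G z' {}" "zs = annotate_stack G z'"
      using PopProd(1) \<open>g = (f, X)\<close> by (cases z) auto
    ultimately show ?thesis
      using PopProd unfolding a
      by (intro exI[of _ "[NT B z']"]) (auto simp: mem_dot_iff intro: produces.PopProd)
  qed
qed

lemma derives_annotate:
  assumes wf: "wf_igrammar G" and "derives G u (map Tm w)" and "set w \<subseteq> tms G"
  shows "derives (annotate G) (map (annotate_sym G) u) (map Tm w)"
  using assms(2) unfolding derives_def
proof (induction rule: converse_rtranclp_induct)
  case base
  then show ?case
    by (simp add: comp_def)
next
  case (step u u')
  obtain u1 a u2 r where u: "u = u1 @ [a] @ u2" and u': "u' = u1 @ r @ u2"
    and prod: "produces G a r"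
    using step.hyps(1) unfolding step_iff_produces by blast
  have "\<forall>b\<in>set u'. reaches_sym G {} b"
    using step.hyps(2) assms(3) unfolding derives_def[symmetric] derives_terminal_iff[symmetric]
    by blast
  then have "produces (annotate G) (annotate_sym G a) (map (annotate_sym G) r)"
    using produces_annotate[OF wf prod] u' by simp
  then have "step (annotate G) (map (annotate_sym G) u) (map (annotate_sym G) u')"
    unfolding u u' step_iff_produces by fastforce
  then show ?case
    using step.IH by (rule converse_rtranclp_into_rtranclp)
qed

lemma derives_annotateD:
  assumes wf: "wf_igrammar G" and "derives (annotate G) (map (annotate_sym G) u) v'"
    and "\<forall>a\<in>set u. reaches_sym G {} a"
  shows "\<exists>v. v' = map (annotate_sym G) v \<and> derives G u v \<and> (\<forall>b\<in>set v. reaches_sym G {} b)"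
  using assms(2) unfolding derives_def
proof (induction rule: rtranclp_induct)
  case base
  then show ?case
    using assms(3) by blast
next
  case (step v' v'')
  then obtain v where v': "v' = map (annotate_sym G) v" and "(step G)\<^sup>*\<^sup>* u v"
    and reach: "\<forall>b\<in>set v. reaches_sym G {} b"
    unfolding derives_def by blast
  obtain x1 a' x2 r' where "v' = x1 @ [a'] @ x2" and v'': "v'' = x1 @ r' @ x2"
    and "produces (annotate G) a' r'"
    using step.hyps(2) unfolding step_iff_produces by blast
  then obtain v1 a v2 where v: "v = v1 @ [a] @ v2" and "x1 = map (annotate_sym G) v1"
    and "x2 = map (annotate_sym G) v2" and "produces (annotate G) (annotate_sym G a) r'"
    unfolding v' by (auto simp: map_eq_append_conv)
  moreover obtain r where "r' = map (annotate_sym G) r" and "produces G a r"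
    and "\<forall>b\<in>set r. reaches_sym G {} b"
    using produces_annotateD[OF wf \<open>produces (annotate G) (annotate_sym G a) r'\<close>] by blast
  moreover have "step G v (v1 @ r @ v2)"
    unfolding v step_iff_produces using \<open>produces G a r\<close> by blast
  ultimately show ?case
    using v'' reach \<open>(step G)\<^sup>*\<^sup>* u v\<close> unfolding derives_def
    by (intro exI[of _ "v1 @ r @ v2"]) (auto intro: rtranclp.rtrancl_into_rtrancl)
qed

theorem lemma4p2:
  fixes G :: "('n, 't, 'i) igrammar"
  assumes "wf_igrammar G"
    and "start G \<in> Useful G"
  shows "lang (annotate G) = lang G \<and>
         (\<forall>u. derives (annotate G) [NT (start (annotate G)) []] u \<longrightarrow>
              (\<exists>w. set w \<subseteq> tms (annotate G) \<and> derives (annotate G) u (map Tm w)))"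
proof -
  note wf = assms(1)
  have start: "[NT (start (annotate G)) []] = map (annotate_sym G) [NT (start G) []]"
    by (simp add: Useful_eq_dot)
  have reachable: "\<exists>v. u = map (annotate_sym G) v \<and> derives G [NT (start G) []] v \<and>
      (\<forall>b\<in>set v. reaches_sym G {} b)"
    if "derives (annotate G) [NT (start (annotate G)) []] u" for u
    using derives_annotateD[OF wf that[unfolded start]] assms(2)
    by (simp add: Useful_eq_dot mem_dot_iff)
  have "lang (annotate G) \<subseteq> lang G"
    using reachable unfolding lang_def by (force simp: map_Tm_eq_map_annotate_sym_iff)
  moreover have "lang G \<subseteq> lang (annotate G)"
    using derives_annotate[OF wf, of "[NT (start G) []]"] unfolding lang_def start by auto
  moreover have "\<exists>w. set w \<subseteq> tms (annotate G) \<and> derives (annotate G) u (map Tm w)"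
    if "derives (annotate G) [NT (start (annotate G)) []] u" for u
    using reachable[OF that] derives_annotate[OF wf] derives_terminal_iff by fastforce
  ultimately show ?thesis
    by blast
qed

end
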